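(* Let $q$ be a prime power and let $C\subseteq\mathrm{GF}(q^m)^n$ be a (linear or nonlinear) code with $n\le m$, $|C|=q^{mk}$ for an integer $1\le k\le n$, and minimum rank distance $d_{\mathrm R}=n-k+1$; let $r=n-k$. For an integer $u$ let $A_u$ be the number of codewords of $C$ of rank $u$. Then for every $u$ with $d_{\mathrm R}\le u\le n$, $$A_u\le{n\brack u}A(m,u-r).$$
   Context: For $\mathbf x=(x_0,\dots,x_{n-1})\in\mathrm{GF}(q^m)^n$, $\mathrm{rk}(\mathbf x)$ is the dimension over $\mathrm{GF}(q)$ of the $\mathrm{GF}(q)$-span of $x_0,\dots,x_{n-1}$; the minimum rank distance of $C$ is the minimum of $\mathrm{rk}(\mathbf c-\mathbf d)$ over distinct codewords. $A(m,0)=1$, $A(m,j)=\prod_{i=0}^{j-1}(q^m-q^i)$ for $j\ge1$, and ${n\brack u}=A(n,u)/A(u,u)$. *)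

theory Defs
  imports "HOL-Analysis.Analysis"
begin

text \<open>Model: GF(q) is a finite field type 'a (q = CARD('a)); GF(q^m) is identified,
  as a GF(q)-vector space, with 'a^'m (m = CARD('m)); a word of length n is an
  element of ('a^'m)^'n (n = CARD('n)).\<close>

definition rk :: "('a::field ^ 'm) ^ 'n \<Rightarrow> nat" where
  "rk x = vec.dim (range (\<lambda>i. x $ i))"

definition min_rank_dist :: "(('a::field ^ 'm) ^ 'n) set \<Rightarrow> nat" where
  "min_rank_dist C = Min {rk (c - d) | c d. c \<in> C \<and> d \<in> C \<and> c \<noteq> d}"

definition A_fun :: "nat \<Rightarrow> nat \<Rightarrow> nat \<Rightarrow> real" where
  "A_fun q m j = (\<Prod>i<j. (real q ^ m - real q ^ i))"

definition gauss_binom :: "nat \<Rightarrow> nat \<Rightarrow> nat \<Rightarrow> real" where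
  "gauss_binom q n u = A_fun q n u / A_fun q u u"

definition weight_count :: "(('a::field ^ 'm) ^ 'n) set \<Rightarrow> nat \<Rightarrow> nat" where
  "weight_count C u = card {c \<in> C. rk c = u}"

end

theory Submission
  imports Defs
begin

text \<open>A word c acts on GF(q)^n as the GF(q)-linear map a \<mapsto> \<Sum>i a_i c_i, whose image is the
  GF(q)-span of the entries of c. If rk c = u, its kernel K has dimension n - u and c is determined
  by K together with the images of a fixed basis v_1, ..., v_u of a complement of K; these images
  are linearly independent. Two codewords with kernel K whose images agree on v_1, ..., v_(u-r)
  differ by a word of rank at most r < d_R, so at most A(m, u - r) codewords of rank u have kernel K.
  Counting ordered bases shows that there are A(n, n-u) / A(n-u, n-u) = [n, u] subspaces of
  dimension n - u, which gives the bound.\<close>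

lemma span_Int_span_Diff:
  fixes B B' :: "('a::field ^ 'n) set"
  assumes B': "vec.independent B'" and sub: "B \<subseteq> B'"
  shows "vec.span B \<inter> vec.span (B' - B) = {0}"
proof -
  have fin: "finite B'" using B' by (rule vec.finiteI_independent)
  have "vec.dim (vec.span B) + vec.dim (vec.span (B' - B)) = card B'"
    using B' sub fin vec.independent_mono[OF B', of B] vec.independent_mono[OF B', of "B' - B"]
    by (simp add: vec.dim_eq_card_independent card_Diff_subset finite_subset card_mono)
  moreover have "{x + y |x y. x \<in> vec.span B \<and> y \<in> vec.span (B' - B)} = vec.span B'"
    using sub by (simp add: vec.span_Un[symmetric] Un_absorb1)
  ultimately have "vec.dim (vec.span B \<inter> vec.span (B' - B)) = 0"
    using vec.dim_sums_Int[OF vec.subspace_span vec.subspace_span, of B "B' - B"]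
      vec.dim_eq_card_independent[OF B'] by simp
  then show ?thesis
    using vec.span_zero by auto
qed

lemma subspace_complement:
  fixes K :: "('a::field ^ 'n) set"
  assumes "vec.subspace K"
  obtains vs where "distinct vs" "length vs = CARD('n) - vec.dim K" "vec.independent (set vs)"
    "vec.span (K \<union> set vs) = UNIV" "K \<inter> vec.span (set vs) = {0}"
proof -
  obtain B where B: "B \<subseteq> K" "vec.independent B" "K \<subseteq> vec.span B" "card B = vec.dim K"
    using vec.basis_exists by blast
  then have span_B: "vec.span B = K"
    using assms vec.span_minimal by blast
  define B' where "B' = vec.extend_basis B"
  have B': "B \<subseteq> B'" "vec.independent B'" "vec.span B' = UNIV"
    unfolding B'_def using B(2)
    by (simp_all add: vec.extend_basis_superset vec.independent_extend_basis)
  have "finite B'" using B'(2) by (rule vec.finiteI_independent)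
  then obtain vs where vs: "distinct vs" "set vs = B' - B"
    by (metis finite_Diff finite_distinct_list)
  have "card B' = CARD('n)"
    by (metis B'(2,3) vec.dim_eq_card_independent vec.dim_span vec_dim_card)
  then have length: "length vs = CARD('n) - vec.dim K"
    using vs B(4) B'(1) \<open>finite B'\<close> by (metis card_Diff_subset distinct_card finite_subset)
  have indep: "vec.independent (set vs)"
    using B'(2) vs(2) vec.independent_mono by blast
  have spans: "vec.span (K \<union> set vs) = UNIV"
    using vec.span_mono[of B' "K \<union> set vs"] B'(3) B(1) vs(2) by auto
  have "K \<inter> vec.span (set vs) = {0}"
    using span_Int_span_Diff[OF B'(2,1)] span_B vs(2) by simp
  then show ?thesis
    by (rule that[OF vs(1) length indep spans])
qed

lemma range_linear_eq_span:
  fixes f :: "'a::field ^ 'n \<Rightarrow> 'a ^ 'm"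
  assumes f: "Vector_Spaces.linear (*s) (*s) f"
    and spans: "vec.span (K \<union> V) = UNIV" and kills: "\<And>x. x \<in> K \<Longrightarrow> f x = 0"
  shows "range f = vec.span (f ` V)"
proof -
  interpret f: Vector_Spaces.linear "(*s)" "(*s)" f by (rule f)
  have "range f = f ` vec.span (K \<union> V)" by (simp add: spans)
  also have "\<dots> = vec.span (f ` (K \<union> V))" by (rule f.span_image[symmetric])
  also have "\<dots> = vec.span (f ` V)"
    unfolding vec.span_eq by (auto simp: kills vec.span_zero intro: vec.span_base)
  finally show ?thesis .
qed

lemma inj_on_span_complement:
  fixes f :: "'a::field ^ 'n \<Rightarrow> 'a ^ 'm"
  assumes f: "Vector_Spaces.linear (*s) (*s) f"
    and complement: "K \<inter> vec.span V = {0}" and kernel: "\<And>x. f x = 0 \<Longrightarrow> x \<in> K"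
  shows "inj_on f (vec.span V)"
proof -
  interpret f: Vector_Spaces.linear "(*s)" "(*s)" f by (rule f)
  show ?thesis
    using complement kernel by (auto simp: f.inj_on_iff_eq_0[OF vec.subspace_span])
qed

lemma card_span_independent:
  fixes B :: "('a::{field,finite} ^ 'n) set"
  assumes B: "vec.independent B"
  shows "card (vec.span B) = CARD('a) ^ card B"
proof -
  have fin: "finite B" using B by (rule vec.finiteI_independent)
  let ?comb = "\<lambda>u. \<Sum>v\<in>B. u v *s v"
  have "vec.span B = ?comb ` (B \<rightarrow>\<^sub>E UNIV)"
  proof -
    have "?comb u \<in> ?comb ` (B \<rightarrow>\<^sub>E UNIV)" for u
    proof (rule image_eqI)
      show "?comb u = ?comb (restrict u B)" by (rule sum.cong) auto
    qed (rule restrict_PiE_iff[THEN iffD2], simp)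
    then show ?thesis using vec.span_finite[OF fin] by auto
  qed
  moreover have "inj_on ?comb (B \<rightarrow>\<^sub>E UNIV)"
  proof (rule inj_onI)
    fix u u' assume u: "u \<in> B \<rightarrow>\<^sub>E UNIV" and u': "u' \<in> B \<rightarrow>\<^sub>E UNIV" and eq: "?comb u = ?comb u'"
    define d where "d v = u v - u' v" for v
    have "(\<Sum>v\<in>B. d v *s v) = 0"
      using eq by (simp add: d_def vector_sub_rdistrib sum_subtractf)
    then have "\<forall>v\<in>B. d v = 0"
      using B unfolding vec.independent_explicit by blast
    then show "u = u'" using u u' by (auto simp: d_def intro: PiE_ext)
  qed
  ultimately show ?thesis
    using fin by (simp add: card_image card_funcsetE)
qed

lemma card_subspace:
  fixes W :: "('a::{field,finite} ^ 'n) set"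
  assumes "vec.subspace W"
  shows "card W = CARD('a) ^ vec.dim W"
proof -
  obtain B where B: "B \<subseteq> W" "vec.independent B" "W \<subseteq> vec.span B" "card B = vec.dim W"
    using vec.basis_exists by blast
  then have "vec.span B = W" using assms vec.span_minimal by blast
  then show ?thesis using card_span_independent[OF B(2)] B(4) by simp
qed

definition indep_lists :: "('a::field ^ 'n) set \<Rightarrow> nat \<Rightarrow> ('a ^ 'n) list set" where
  "indep_lists W j = {xs. length xs = j \<and> distinct xs \<and> vec.independent (set xs) \<and> set xs \<subseteq> W}"

lemma finite_indep_lists: "finite (indep_lists (W :: ('a::{field,finite} ^ 'n) set) j)"
proof (rule finite_subset)
  show "indep_lists W j \<subseteq> {xs. set xs \<subseteq> UNIV \<and> length xs = j}"
    unfolding indep_lists_def by auto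
qed (rule finite_lists_length_eq, simp)

lemma indep_lists_Suc:
  "indep_lists W (Suc j) = (\<lambda>(xs, x). x # xs) ` (SIGMA xs:indep_lists W j. W - vec.span (set xs))"
proof (rule set_eqI, rule iffI)
  fix ys assume ys: "ys \<in> indep_lists W (Suc j)"
  then obtain x xs where ys_eq: "ys = x # xs" unfolding indep_lists_def by (cases ys) auto
  with ys have "xs \<in> indep_lists W j" "x \<in> W - vec.span (set xs)"
    unfolding indep_lists_def by (auto simp: vec.independent_insert vec.independent_mono)
  then show "ys \<in> (\<lambda>(xs, x). x # xs) ` (SIGMA xs:indep_lists W j. W - vec.span (set xs))"
    using ys_eq by (intro image_eqI[of _ _ "(xs, x)"]) auto
next
  fix ys assume "ys \<in> (\<lambda>(xs, x). x # xs) ` (SIGMA xs:indep_lists W j. W - vec.span (set xs))"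
  then obtain x xs where "ys = x # xs" "xs \<in> indep_lists W j" "x \<in> W" "x \<notin> vec.span (set xs)"
    by auto
  then show "ys \<in> indep_lists W (Suc j)"
    unfolding indep_lists_def using vec.span_base[of x "set xs"]
    by (auto simp: vec.independent_insert)
qed

lemma card_indep_lists:
  fixes W :: "('a::{field,finite} ^ 'n) set"
  assumes W: "vec.subspace W"
  shows "real (card (indep_lists W j)) = A_fun CARD('a) (vec.dim W) j"
proof (induction j)
  case 0
  have "indep_lists W 0 = {[]}" by (auto simp: indep_lists_def vec.independent_empty)
  then show ?case by (simp add: A_fun_def)
next
  case (Suc j)
  have card_extensions: "real (card (W - vec.span (set xs))) = real CARD('a) ^ vec.dim W - real CARD('a) ^ j"
    if xs: "xs \<in> indep_lists W j" for xs
  proof -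
    have sub: "vec.span (set xs) \<subseteq> W"
      using xs W vec.span_minimal unfolding indep_lists_def by blast
    have "card (vec.span (set xs)) = CARD('a) ^ j"
      using card_span_independent[of "set xs"] xs unfolding indep_lists_def by (simp add: distinct_card)
    then show ?thesis
      using sub card_subspace[OF W] card_mono[OF _ sub]
      by (simp add: card_Diff_subset of_nat_diff)
  qed
  have "inj_on (\<lambda>(xs, x). x # xs) (SIGMA xs:indep_lists W j. W - vec.span (set xs))"
    by (rule inj_onI) auto
  then have "real (card (indep_lists W (Suc j)))
      = real (card (SIGMA xs:indep_lists W j. W - vec.span (set xs)))"
    unfolding indep_lists_Suc by (simp add: card_image)
  also have "\<dots> = (\<Sum>xs\<in>indep_lists W j. real (card (W - vec.span (set xs))))"
    by (simp add: card_SigmaI finite_indep_lists)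
  also have "\<dots> = real (card (indep_lists W j)) * (real CARD('a) ^ vec.dim W - real CARD('a) ^ j)"
    by (simp add: card_extensions)
  also have "\<dots> = A_fun CARD('a) (vec.dim W) (Suc j)"
    using Suc by (simp add: A_fun_def)
  finally show ?case .
qed

lemma span_indep_lists_dim:
  fixes W :: "('a::field ^ 'n) set"
  assumes W: "vec.subspace W" and xs: "xs \<in> indep_lists W (vec.dim W)"
  shows "vec.span (set xs) = W"
proof -
  have "card (set xs) = vec.dim W" using xs unfolding indep_lists_def by (simp add: distinct_card)
  then have "W \<subseteq> vec.span (set xs)"
    using xs vec.card_eq_dim[of "set xs" W] unfolding indep_lists_def by auto
  moreover have "vec.span (set xs) \<subseteq> W"
    using xs W vec.span_minimal unfolding indep_lists_def by blast
  ultimately show ?thesis by blast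
qed

lemma one_less_card_field: "1 < CARD('a::{field,finite})"
proof -
  have "card {0::'a, 1} \<le> CARD('a)" by (rule card_mono) auto
  then show ?thesis by simp
qed

lemma A_fun_pos:
  assumes "1 < q" and "j \<le> n"
  shows "0 < A_fun q n j"
  unfolding A_fun_def
proof (rule prod_pos)
  fix i assume "i \<in> {..<j}"
  then have "real q ^ i < real q ^ n" using assms by (intro power_strict_increasing) auto
  then show "0 < real q ^ n - real q ^ i" by simp
qed

lemma card_subspaces_of_dim:
  "real (card {W :: ('a::{field,finite} ^ 'n) set. vec.subspace W \<and> vec.dim W = d})
     = gauss_binom CARD('a) CARD('n) d"
proof -
  let ?S = "{W :: ('a ^ 'n) set. vec.subspace W \<and> vec.dim W = d}"
  have partition: "indep_lists (UNIV :: ('a ^ 'n) set) d = (\<Union>W\<in>?S. indep_lists W d)"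
  proof
    show "indep_lists (UNIV :: ('a ^ 'n) set) d \<subseteq> (\<Union>W\<in>?S. indep_lists W d)"
    proof
      fix xs :: "('a ^ 'n) list" assume xs: "xs \<in> indep_lists UNIV d"
      then have "vec.dim (vec.span (set xs)) = d"
        unfolding indep_lists_def by (simp add: vec.dim_eq_card_independent distinct_card)
      with xs show "xs \<in> (\<Union>W\<in>?S. indep_lists W d)"
        unfolding indep_lists_def by (auto intro!: bexI[of _ "vec.span (set xs)"] vec.span_base)
    qed
  qed (auto simp: indep_lists_def)
  have disjoint: "indep_lists W d \<inter> indep_lists W' d = {}" if "W \<in> ?S" "W' \<in> ?S" "W \<noteq> W'" for W W'
    using that span_indep_lists_dim[of W] span_indep_lists_dim[of W'] by (simp, blast)
  have "A_fun CARD('a) CARD('n) d = real (card (indep_lists (UNIV :: ('a ^ 'n) set) d))"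
    using card_indep_lists[of "UNIV :: ('a ^ 'n) set" d] vec.subspace_UNIV unfolding vec_dim_card by simp
  also have "\<dots> = (\<Sum>W\<in>?S. real (card (indep_lists W d)))"
    unfolding partition by (simp add: card_UN_disjoint finite_indep_lists disjoint)
  also have "\<dots> = real (card ?S) * A_fun CARD('a) d d"
    by (simp add: card_indep_lists)
  finally show ?thesis
    using A_fun_pos[OF one_less_card_field[where 'a='a], of d d] by (simp add: gauss_binom_def)
qed

lemma A_fun_split:
  assumes "j \<le> n"
  shows "A_fun q n n = A_fun q n j * real q ^ (j * (n - j)) * A_fun q (n - j) (n - j)"
proof -
  let ?Q = "real q"
  let ?f = "\<lambda>i. ?Q ^ n - ?Q ^ i"
  have "A_fun q n n = prod ?f {0..<j} * prod ?f {j..<n}"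
    using prod.atLeastLessThan_concat[of 0 j n ?f] assms by (simp add: A_fun_def atLeast0LessThan)
  also have "prod ?f {j..<n} = (\<Prod>l<n - j. ?Q ^ j * (?Q ^ (n - j) - ?Q ^ l))"
  proof -
    have "?f (j + l) = ?Q ^ j * (?Q ^ (n - j) - ?Q ^ l)" for l
      using assms by (simp add: right_diff_distrib flip: power_add)
    then show ?thesis
      using prod.atLeastLessThan_shift_0[of ?f j n] by (simp add: atLeast0LessThan)
  qed
  also have "\<dots> = (?Q ^ j) ^ (n - j) * A_fun q (n - j) (n - j)"
    by (simp add: A_fun_def prod.distrib)
  finally show ?thesis
    by (simp add: A_fun_def atLeast0LessThan power_mult)
qed

lemma gauss_binom_symmetric:
  assumes "1 < q" and "u \<le> n"
  shows "gauss_binom q n (n - u) = gauss_binom q n u"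
proof -
  have "A_fun q n n = (A_fun q n u * A_fun q (n - u) (n - u)) * real q ^ (u * (n - u))"
    using A_fun_split[OF assms(2), of q] by (simp only: ac_simps)
  moreover have "A_fun q n n = (A_fun q n (n - u) * A_fun q u u) * real q ^ (u * (n - u))"
    using A_fun_split[of "n - u" n q] assms(2) by (simp only: diff_le_self diff_diff_cancel ac_simps)
  ultimately have "A_fun q n u * A_fun q (n - u) (n - u) = A_fun q n (n - u) * A_fun q u u"
    using assms(1) by simp
  then show ?thesis
    using A_fun_pos[OF assms(1), of u u] A_fun_pos[OF assms(1), of "n - u" "n - u"]
    by (simp add: gauss_binom_def frac_eq_eq)
qed

lemma linear_vector_matrix_mult: "Vector_Spaces.linear (*s) (*s) (\<lambda>a. a v* c)"
proof -
  have "(\<lambda>a. a v* c) = (*v) (transpose c)" by (simp add: fun_eq_iff)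
  then show ?thesis by simp
qed

lemma axis_vector_matrix_mult: "axis i 1 v* c = c $ i"
  by (simp add: vec_eq_iff vector_matrix_mult_def axis_def of_bool_def[symmetric])

lemma range_vector_matrix_mult:
  fixes c :: "('a::field ^ 'm) ^ 'n"
  shows "range (\<lambda>a. a v* c) = vec.span (range (($) c))"
proof -
  interpret f: Vector_Spaces.linear "(*s)" "(*s)" "\<lambda>a. a v* c"
    by (rule linear_vector_matrix_mult)
  have "range (\<lambda>a. a v* c) = (\<lambda>a. a v* c) ` vec.span cart_basis" by simp
  also have "\<dots> = vec.span ((\<lambda>a. a v* c) ` cart_basis)" by (rule f.span_image[symmetric])
  also have "cart_basis = range (\<lambda>i. axis i 1)"
    by (auto simp: cart_basis_def)
  also have "(\<lambda>a. a v* c) ` range (\<lambda>i. axis i 1) = range (($) c)"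
    by (simp add: image_image axis_vector_matrix_mult)
  finally show ?thesis .
qed

lemma rk_eq_dim_range: "rk c = vec.dim (range (\<lambda>a. a v* c))"
  by (simp add: rk_def range_vector_matrix_mult)

text \<open>As a v* c = \<Sum>i a_i c_i, these are the GF(q)-linear relations among the entries
  c_i \<in> GF(q^m) of the word c.\<close>

definition coord_relations :: "('a::field ^ 'm) ^ 'n \<Rightarrow> ('a ^ 'n) set" where
  "coord_relations c = {a. a v* c = 0}"

lemma subspace_coord_relations: "vec.subspace (coord_relations c)"
proof -
  interpret f: Vector_Spaces.linear "(*s)" "(*s)" "\<lambda>a. a v* c"
    by (rule linear_vector_matrix_mult)
  show ?thesis unfolding coord_relations_def by (rule f.subspace_kernel)
qed

lemma rk_add_dim_coord_relations:
  fixes c :: "('a::field ^ 'm) ^ 'n"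
  shows "rk c + vec.dim (coord_relations c) = CARD('n)"
proof -
  obtain vs where vs: "distinct vs" "length vs = CARD('n) - vec.dim (coord_relations c)"
    "vec.independent (set vs)" "vec.span (coord_relations c \<union> set vs) = UNIV"
    "coord_relations c \<inter> vec.span (set vs) = {0}"
    using subspace_complement[OF subspace_coord_relations] by blast
  have inj: "inj_on (\<lambda>a. a v* c) (vec.span (set vs))"
    by (rule inj_on_span_complement[OF linear_vector_matrix_mult vs(5)])
      (simp add: coord_relations_def)
  have "rk c = vec.dim (vec.span ((\<lambda>a. a v* c) ` set vs))"
    unfolding rk_eq_dim_range
    by (rule arg_cong[where f = vec.dim], rule range_linear_eq_span[OF linear_vector_matrix_mult vs(4)])
      (simp add: coord_relations_def)
  also have "\<dots> = vec.dim (set vs)"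
    using vec.dim_image_eq[OF linear_vector_matrix_mult inj] by simp
  also have "\<dots> = length vs"
    using vec.dim_eq_card_independent[OF vs(3)] vs(1) by (simp add: distinct_card)
  finally show ?thesis
    using vs(2) dim_subset_UNIV_cart_gen[of "coord_relations c"] by simp
qed

lemma card_coord_relations_fiber_le:
  fixes C :: "(('a::{field,finite} ^ 'm) ^ 'n) set" and K :: "('a ^ 'n) set"
  assumes K: "vec.subspace K"
    and dist: "\<And>c c'. c \<in> C \<Longrightarrow> c' \<in> C \<Longrightarrow> c \<noteq> c' \<Longrightarrow> r < rk (c - c')"
  shows "real (card {c \<in> C. coord_relations c = K})
           \<le> A_fun CARD('a) CARD('m) (CARD('n) - vec.dim K - r)"
proof -
  let ?F = "{c \<in> C. coord_relations c = K}"
  define u where "u = CARD('n) - vec.dim K"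
  obtain vs where vs: "distinct vs" "length vs = u" "vec.independent (set vs)"
    "vec.span (K \<union> set vs) = UNIV" "K \<inter> vec.span (set vs) = {0}"
    using subspace_complement[OF K] unfolding u_def by blast
  define T where "T = take (u - r) vs"
  define R where "R = drop (u - r) vs"
  have TR: "set T \<union> set R = set vs"
    unfolding T_def R_def by (metis append_take_drop_id set_append)
  let ?head = "\<lambda>c. map (\<lambda>v. v v* c) T"
  have head: "?head c \<in> indep_lists UNIV (u - r)" if c: "c \<in> ?F" for c
  proof -
    interpret f: Vector_Spaces.linear "(*s)" "(*s)" "\<lambda>a. a v* c"
      by (rule linear_vector_matrix_mult)
    have "inj_on (\<lambda>v. v v* c) (vec.span (set vs))"
      by (rule inj_on_span_complement[OF linear_vector_matrix_mult vs(5)])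
        (use c in \<open>auto simp: coord_relations_def\<close>)
    then have inj: "inj_on (\<lambda>v. v v* c) (vec.span (set T))"
      using TR vec.span_mono[of "set T" "set vs"] by (blast intro: inj_on_subset)
    have "vec.independent ((\<lambda>v. v v* c) ` set T)"
      using vec.independent_mono[OF vs(3), of "set T"] TR inj
      by (intro f.independent_injective_image) auto
    moreover have "distinct (?head c)"
      using vs(1) inj vec.span_superset unfolding T_def
      by (auto simp: distinct_map intro: inj_on_subset)
    ultimately show ?thesis
      using vs(2) by (simp add: indep_lists_def T_def)
  qed
  have "inj_on ?head ?F"
  proof (rule inj_onI, rule ccontr)
    fix c c' assume c: "c \<in> ?F" and c': "c' \<in> ?F" and eq: "?head c = ?head c'" and ne: "c \<noteq> c'"
    let ?f = "\<lambda>v. v v* (c - c')"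
    have "?f v = 0" if "v \<in> K \<union> set T" for v
      using that c c' eq by (auto simp: coord_relations_def vector_matrix_mult_diff_rdistrib)
    moreover have "vec.span ((K \<union> set T) \<union> set R) = UNIV"
      using vs(4) TR by (simp add: Un_assoc)
    ultimately have "range ?f = vec.span (?f ` set R)"
      by (intro range_linear_eq_span linear_vector_matrix_mult) auto
    then have "rk (c - c') \<le> card (?f ` set R)"
      unfolding rk_eq_dim_range by (intro vec.dim_le_card) auto
    also have "\<dots> \<le> length R"
      using card_image_le card_length le_trans by blast
    also have "\<dots> \<le> r"
      using vs(2) by (simp add: R_def)
    finally show False
      using dist c c' ne by fastforce
  qed
  then have "card ?F \<le> card (indep_lists (UNIV :: ('a ^ 'm) set) (u - r))"
    using head by (intro card_inj_on_le finite_indep_lists) auto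
  also have "real \<dots> = A_fun CARD('a) CARD('m) (u - r)"
    using card_indep_lists[of "UNIV :: ('a ^ 'm) set"] vec.subspace_UNIV unfolding vec_dim_card by simp
  finally show ?thesis
    unfolding u_def by simp
qed

lemma min_rank_dist_le:
  fixes C :: "(('a::{field,finite} ^ 'm) ^ 'n) set"
  assumes "c \<in> C" "d \<in> C" "c \<noteq> d"
  shows "min_rank_dist C \<le> rk (c - d)"
proof -
  have "{rk (c - d) | c d. c \<in> C \<and> d \<in> C \<and> c \<noteq> d} \<subseteq> (\<lambda>(c, d). rk (c - d)) ` (C \<times> C)"
    by force
  then have "finite {rk (c - d) | c d. c \<in> C \<and> d \<in> C \<and> c \<noteq> d}"
    by (rule finite_subset) simp
  then show ?thesis
    unfolding min_rank_dist_def by (rule Min_le) (use assms in blast)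
qed

lemma weight_count_le_gauss_binom:
  fixes C :: "(('a::{field,finite} ^ 'm) ^ 'n) set"
  assumes dist: "\<And>c c'. c \<in> C \<Longrightarrow> c' \<in> C \<Longrightarrow> c \<noteq> c' \<Longrightarrow> r < rk (c - c')"
    and "u \<le> CARD('n)"
  shows "real (weight_count C u)
           \<le> gauss_binom CARD('a) CARD('n) u * A_fun CARD('a) CARD('m) (u - r)"
proof -
  let ?S = "{K :: ('a ^ 'n) set. vec.subspace K \<and> vec.dim K = CARD('n) - u}"
  let ?fiber = "\<lambda>K. {c \<in> C. coord_relations c = K}"
  have "{c \<in> C. rk c = u} \<subseteq> (\<Union>K\<in>?S. ?fiber K)"
  proof
    fix c assume "c \<in> {c \<in> C. rk c = u}"
    then show "c \<in> (\<Union>K\<in>?S. ?fiber K)"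
      using rk_add_dim_coord_relations[of c] subspace_coord_relations[of c] by auto
  qed
  then have "weight_count C u \<le> card (\<Union>K\<in>?S. ?fiber K)"
    unfolding weight_count_def by (rule card_mono[rotated]) simp
  also have "\<dots> \<le> (\<Sum>K\<in>?S. card (?fiber K))"
    by (rule card_UN_le) simp
  finally have "real (weight_count C u) \<le> (\<Sum>K\<in>?S. real (card (?fiber K)))"
    by (simp only: of_nat_sum[symmetric] of_nat_le_iff)
  also have "\<dots> \<le> (\<Sum>K\<in>?S. A_fun CARD('a) CARD('m) (u - r))"
  proof (rule sum_mono)
    fix K assume "K \<in> ?S"
    then show "real (card (?fiber K)) \<le> A_fun CARD('a) CARD('m) (u - r)"
      using card_coord_relations_fiber_le[of K C r, OF _ dist] assms(2) by simp
  qed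
  also have "\<dots> = gauss_binom CARD('a) CARD('n) (CARD('n) - u) * A_fun CARD('a) CARD('m) (u - r)"
    using card_subspaces_of_dim[where 'a='a and 'n='n, of "CARD('n) - u"] by simp
  also have "\<dots> = gauss_binom CARD('a) CARD('n) u * A_fun CARD('a) CARD('m) (u - r)"
    using gauss_binom_symmetric[OF one_less_card_field[where 'a='a] assms(2)] by simp
  finally show ?thesis .
qed

theorem lemma6:
  fixes C :: "(('a::{field,finite} ^ 'm) ^ 'n) set"
    and k r u :: nat
  assumes "CARD('n) \<le> CARD('m)"
    and "1 \<le> k" and "k \<le> CARD('n)"
    and "card C = CARD('a) ^ (CARD('m) * k)"
    and "min_rank_dist C = CARD('n) - k + 1"
    and "r = CARD('n) - k"
    and "min_rank_dist C \<le> u" and "u \<le> CARD('n)"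
  shows "real (weight_count C u)
           \<le> gauss_binom CARD('a) CARD('n) u * A_fun CARD('a) CARD('m) (u - r)"
proof -
  have "r < rk (c - c')" if "c \<in> C" "c' \<in> C" "c \<noteq> c'" for c c'
    using min_rank_dist_le[OF that] assms(5,6) by simp
  then show ?thesis
    using weight_count_le_gauss_binom assms(8) by blast
qed

end
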